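(* Suppose the folded ribbon knot $\mathcal{K}_{w,F}$ is a topological annulus. Consider a piece of the ribbon of $\mathcal{K}_{w,F}$ corresponding to a part of the knot diagram which has no self-intersections and contains exactly two vertices. Then the contribution of that piece of ribbon to the ribbon linking number is $\pm1$ if and only if its two folds have the same sign.
   Context: For a polygonal knot diagram $\mathcal{K}$ and width $w>0$, the folded ribbon knot $\mathcal{K}_{w,F}$ is a flat strip of width $w$ centred on $\mathcal{K}$, folded at each vertex along a fold line through the vertex perpendicular to the bisector of the angle between the adjacent edges (a piecewise-linear immersion of an annulus or Möbius band whose only singularities are pairwise disjoint fold lines); it is an annulus when $\mathcal{K}$ has an even number of edges. The ribbon linking number is the linking number of the oriented knot diagram with one boundary component of the ribbon (oriented parallel to $\mathcal{K}$), i.e. one half of the sum of the signs (right-hand rule) of the crossings between the diagram and that boundary component; the contribution of a piece of ribbon is one half the sum of those crossing signs occurring in that piece. At a fold with fold angle in $(0,\pi)$ the two crossings between the ribbon boundary and the knot diagram have a common sign, called the sign of the fold: with $\mathcal{K}$ oriented, left underfolds and right overfolds have sign $+1$, left overfolds and right underfolds have sign $-1$ (a fold at $v_i$, incoming edge $e_{i-1}$, outgoing $e_i$, is left/right according as $e_i$ turns left/right of $e_{i-1}$, and is an underfold if the layer of ribbon along $e_i$ lies beneath the layer along $e_{i-1}$, an overfold otherwise). *)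

theory Defs
  imports "HOL-Analysis.Analysis"
begin

text \<open>Model of a polygonal knot diagram in the plane (identified with the complex numbers):
  vertices v k (indices taken periodically), edge e_k from v k to v (Suc k).
  The over/under structure of the folded ribbon (which includes the crossing information of
  the diagram and the fold types) is recorded by a relation abv j k, meaning that the layer
  of ribbon along edge e_j lies abv the layer along e_k where they overlap (j, k < n).\<close>

definition cross :: "complex \<Rightarrow> complex \<Rightarrow> real" where
  "cross a b = Im (cnj a * b)"

definition edir :: "(nat \<Rightarrow> complex) \<Rightarrow> nat \<Rightarrow> complex" where
  "edir v k = v (Suc k) - v k"

definition unitdir :: "(nat \<Rightarrow> complex) \<Rightarrow> nat \<Rightarrow> complex" where
  "unitdir v k = edir v k / complex_of_real (cmod (edir v k))"

definition lnormal :: "(nat \<Rightarrow> complex) \<Rightarrow> nat \<Rightarrow> complex" where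
  "lnormal v k = \<i> * unitdir v k"

text \<open>direction of the fold line at vertex v k (k \<ge> 1): perpendicular to the bisector
  (direction unitdir v k - unitdir v (k-1)) of the angle between the adjacent edges\<close>
definition fold_dir :: "(nat \<Rightarrow> complex) \<Rightarrow> nat \<Rightarrow> complex" where
  "fold_dir v k = unitdir v (k - 1) + unitdir v k"

definition line_meet :: "complex \<Rightarrow> complex \<Rightarrow> complex \<Rightarrow> complex \<Rightarrow> complex" where
  "line_meet p u c m = p + complex_of_real (cross m (c - p) / cross m u) * u"

text \<open>signed offset (w.r.t. the left normal) of the chosen boundary component (s = 1 or -1)
  on the layer of ribbon along edge e_j; it alternates at each fold, so for an even number of
  edges this is a boundary component of the annulus\<close>
definition boff :: "real \<Rightarrow> real \<Rightarrow> nat \<Rightarrow> real" where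
  "boff s w j = s * (-1) ^ j * w / 2"

definition bfold :: "(nat \<Rightarrow> complex) \<Rightarrow> real \<Rightarrow> real \<Rightarrow> nat \<Rightarrow> nat \<Rightarrow> complex" where
  "bfold v s w j k = line_meet (v j + complex_of_real (boff s w j) * lnormal v j)
                       (unitdir v j) (v k) (fold_dir v k)"

text \<open>The piece of ribbon over the part of the diagram from a (inside e_i) through v (i+1),
  v (i+2) to b (inside e_(i+2)), cut perpendicularly at a and b.\<close>
definition piece_bseg ::
  "(nat \<Rightarrow> complex) \<Rightarrow> real \<Rightarrow> real \<Rightarrow> nat \<Rightarrow> complex \<Rightarrow> complex \<Rightarrow> nat \<Rightarrow> complex set" where
  "piece_bseg v s w i a b j =
     (if j = i then closed_segment (a + complex_of_real (boff s w i) * lnormal v i) (bfold v s w i (i+1))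
      else if j = i + 1 then closed_segment (bfold v s w (i+1) (i+1)) (bfold v s w (i+1) (i+2))
      else if j = i + 2 then closed_segment (bfold v s w (i+2) (i+2))
                               (b + complex_of_real (boff s w (i+2)) * lnormal v (i+2))
      else {})"

definition piece_crossings ::
  "(nat \<Rightarrow> complex) \<Rightarrow> nat \<Rightarrow> real \<Rightarrow> real \<Rightarrow> nat \<Rightarrow> complex \<Rightarrow> complex \<Rightarrow> (nat \<times> nat \<times> complex) set" where
  "piece_crossings v n s w i a b =
     {(j, k, x). j \<in> {i, i+1, i+2} \<and> k < n \<and> k \<noteq> j mod n \<and>
        x \<in> piece_bseg v s w i a b j \<inter> closed_segment (v k) (v (Suc k))}"

text \<open>sign of a crossing between the boundary (on layer j, oriented parallel to the knot)
  and the diagram edge e_k, by the right-hand rule: sgn (cross over_direction under_direction)\<close>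
definition xsign :: "(nat \<Rightarrow> complex) \<Rightarrow> nat \<Rightarrow> (nat \<Rightarrow> nat \<Rightarrow> bool) \<Rightarrow> nat \<Rightarrow> nat \<Rightarrow> real" where
  "xsign v n abv j k =
     (if abv (j mod n) k then sgn (cross (edir v j) (edir v k))
      else sgn (cross (edir v k) (edir v j)))"

definition piece_contribution ::
  "(nat \<Rightarrow> complex) \<Rightarrow> nat \<Rightarrow> (nat \<Rightarrow> nat \<Rightarrow> bool) \<Rightarrow> real \<Rightarrow> real \<Rightarrow> nat \<Rightarrow> complex \<Rightarrow> complex \<Rightarrow> real" where
  "piece_contribution v n abv s w i a b =
     (1/2) * (\<Sum>c\<in>piece_crossings v n s w i a b. xsign v n abv (fst c) (fst (snd c)))"

text \<open>fold at vertex v k (k \<ge> 1), incoming edge e_(k-1), outgoing e_k\<close>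
definition left_fold :: "(nat \<Rightarrow> complex) \<Rightarrow> nat \<Rightarrow> bool" where
  "left_fold v k \<longleftrightarrow> cross (edir v (k - 1)) (edir v k) > 0"

definition underfold :: "nat \<Rightarrow> (nat \<Rightarrow> nat \<Rightarrow> bool) \<Rightarrow> nat \<Rightarrow> bool" where
  "underfold n abv k \<longleftrightarrow> abv ((k - 1) mod n) (k mod n)"

definition fold_sign :: "(nat \<Rightarrow> complex) \<Rightarrow> nat \<Rightarrow> (nat \<Rightarrow> nat \<Rightarrow> bool) \<Rightarrow> nat \<Rightarrow> int" where
  "fold_sign v n abv k = (if left_fold v k \<longleftrightarrow> underfold n abv k then 1 else -1)"

end

theory Submission
  imports Defs
begin

(* For small width w the boundary of the piece stays within O(w) of the three segments of the
   diagram it follows, and these lie at positive distance from all other edges, so every crossing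
   occurs near one of the two folds. In the frame of the incoming edge at a fold with turning
   direction e^{i theta}, the boundary at offset h on the incoming layer meets the outgoing edge
   iff h sin theta > 0, while the boundary on the outgoing layer (offset -h) meets the incoming
   edge iff h sin theta < 0. So each fold carries exactly one crossing, its sign is the sign of
   the fold, and the contribution of the piece is the mean of the two fold signs. *)

lemma cnj_mult_unit:
  fixes u :: complex assumes "cmod u = 1" shows "cnj u * u = 1"
  using complex_norm_square[of u] assms by (simp add: mult.commute)

lemma unit_frame_eq:
  fixes u V z \<zeta> :: complex assumes u: "cmod u = 1"
  shows "z = V + u * \<zeta> \<longleftrightarrow> cnj u * (z - V) = \<zeta>"
proof
  have c: "cnj u * u = 1" by (rule cnj_mult_unit[OF u])
  show "cnj u * (z - V) = \<zeta>" if "z = V + u * \<zeta>"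
    using that c by (simp add: mult.assoc[symmetric])
  assume "cnj u * (z - V) = \<zeta>"
  then have "u * (cnj u * (z - V)) = u * \<zeta>" by simp
  then have "z - V = u * \<zeta>" using c by (simp add: mult.assoc[symmetric] mult.commute[of u])
  then show "z = V + u * \<zeta>" by (simp add: algebra_simps)
qed

lemma closed_segment_unit_frame:
  fixes u V p q z :: complex assumes u: "cmod u = 1"
  shows "z \<in> closed_segment (V + u * p) (V + u * q) \<longleftrightarrow>
    cnj u * (z - V) \<in> closed_segment p q"
proof -
  have affine: "(1 - t) *\<^sub>R (V + u * p) + t *\<^sub>R (V + u * q)
      = V + u * ((1 - t) *\<^sub>R p + t *\<^sub>R q)" for t
    by (simp add: scaleR_conv_of_real algebra_simps)
  show ?thesis
    unfolding in_segment affine unit_frame_eq[OF u] by blast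
qed

lemma cross_mult_unit:
  fixes w y x :: complex assumes "cmod w = 1"
  shows "cross (w * y) (w * x) = Im (cnj y * x)"
proof -
  have rotate: "cnj (w * y) * (w * x) = (cnj w * w) * (cnj y * x)" by (simp add: algebra_simps)
  show ?thesis unfolding cross_def rotate cnj_mult_unit[OF assms] by simp
qed

lemma cross_swap: "cross a b = - cross b a"
  unfolding cross_def by (simp add: algebra_simps)

lemma line_meet_unit_frame:
  fixes w y c p :: complex and l h :: real
  assumes w: "cmod w = 1" and y: "Im y \<noteq> 0" and c: "c - p = of_real l * w"
  shows "line_meet (p + of_real h * (\<i> * w)) w c (w * y) = c + w * Complex (h * Re y / Im y) h"
proof -
  have cw: "cross (w * y) w = - Im y" using cross_mult_unit[OF w, of y 1] by simp
  have "c - (p + of_real h * (\<i> * w)) = w * (of_real l - of_real h * \<i>)"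
    using c by (simp add: algebra_simps)
  then have cp: "cross (w * y) (c - (p + of_real h * (\<i> * w))) = - l * Im y - h * Re y"
    using cross_mult_unit[OF w, of y "of_real l - of_real h * \<i>"] by (simp add: algebra_simps)
  have ratio:
    "cross (w * y) (c - (p + of_real h * (\<i> * w))) / cross (w * y) w = l + h * Re y / Im y"
    unfolding cp cw using y by (simp add: field_simps)
  show ?thesis
    unfolding line_meet_def ratio using c by (simp add: complex_eq_iff algebra_simps)
qed

lemma horizontal_segment_meets_segment_iff:
  fixes \<rho> z :: complex and L h \<xi> :: real
  assumes S: "Im \<rho> \<noteq> 0" and h: "h \<noteq> 0" and L: "\<bar>h / Im \<rho>\<bar> \<le> L"
    and xi: "\<xi> < h * Re \<rho> / Im \<rho>"
  shows "(z \<in> closed_segment (Complex \<xi> h) (Complex (h * (1 + Re \<rho>) / Im \<rho>) h)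
          \<and> z \<in> closed_segment 0 (of_real L * \<rho>))
         \<longleftrightarrow> h * Im \<rho> > 0 \<and> z = of_real (h / Im \<rho>) * \<rho>"
proof -
  have horizontal: "closed_segment (Complex \<xi> h) (Complex (h * (1 + Re \<rho>) / Im \<rho>) h)
      = {z. Im z = h \<and> Re z \<in> closed_segment \<xi> (h * (1 + Re \<rho>) / Im \<rho>)}"
    by (subst closed_segment_same_Im) auto
  have ray: "z \<in> closed_segment 0 (of_real L * \<rho>) \<longleftrightarrow>
      (\<exists>t. 0 \<le> t \<and> t \<le> 1 \<and> z = of_real (t * L) * \<rho>)"
    by (simp add: in_segment scaleR_conv_of_real mult.assoc)
  show ?thesis
  proof
    assume "z \<in> closed_segment (Complex \<xi> h) (Complex (h * (1 + Re \<rho>) / Im \<rho>) h)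
          \<and> z \<in> closed_segment 0 (of_real L * \<rho>)"
    then obtain t where t: "0 \<le> t" "t \<le> 1" and z: "z = of_real (t * L) * \<rho>" and "Im z = h"
      unfolding horizontal ray by blast
    then have tL: "t * L = h / Im \<rho>" using S by (simp add: field_simps)
    moreover have "0 \<le> L" using L abs_ge_zero order.trans by blast
    then have "0 \<le> t * L" using t by simp
    ultimately have "h / Im \<rho> > 0" using h S by (simp add: order_le_less)
    then show "h * Im \<rho> > 0 \<and> z = of_real (h / Im \<rho>) * \<rho>"
      using z tL by (simp add: zero_less_divide_iff zero_less_mult_iff)
  next
    assume hz: "h * Im \<rho> > 0 \<and> z = of_real (h / Im \<rho>) * \<rho>"
    define r where "r = h / Im \<rho>"
    have r: "0 < r" "r \<le> L"
      using hz L by (auto simp: r_def zero_less_divide_iff zero_less_mult_iff)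
    have z: "z = of_real r * \<rho>" using hz by (simp add: r_def)
    have "\<exists>t. 0 \<le> t \<and> t \<le> 1 \<and> z = of_real (t * L) * \<rho>"
      using r by (intro exI[of _ "r / L"]) (simp add: z)
    moreover have "Im z = h" using S by (simp add: z r_def)
    moreover have "Re z = h * Re \<rho> / Im \<rho>" by (simp add: z r_def)
    moreover have "h * (1 + Re \<rho>) / Im \<rho> = h * Re \<rho> / Im \<rho> + r"
      by (simp add: r_def add_divide_distrib distrib_left)
    ultimately show "z \<in> closed_segment (Complex \<xi> h) (Complex (h * (1 + Re \<rho>) / Im \<rho>) h)
          \<and> z \<in> closed_segment 0 (of_real L * \<rho>)"
      unfolding horizontal ray using xi r by (simp add: closed_segment_eq_real_ivl)
  qed
qed

lemma fold_crossing_incoming: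
  fixes V u u' x :: complex and L h \<xi> :: real
  assumes u: "cmod u = 1" and turn: "Im (cnj u * u') \<noteq> 0" and h: "h \<noteq> 0"
    and L: "\<bar>h / Im (cnj u * u')\<bar> \<le> L"
    and xi: "\<xi> < h * Re (cnj u * u') / Im (cnj u * u')"
  shows "(x \<in> closed_segment (V + u * Complex \<xi> h)
                (V + u * Complex (h * (1 + Re (cnj u * u')) / Im (cnj u * u')) h)
          \<and> x \<in> closed_segment V (V + of_real L * u'))
         \<longleftrightarrow> h * Im (cnj u * u') > 0 \<and> x = V + of_real (h / Im (cnj u * u')) * u'"
proof -
  have to_frame: "u * (r * (cnj u * u')) = r * u'" for r
    using cnj_mult_unit[OF u] by (simp add: algebra_simps)
  have edge: "closed_segment V (V + of_real L * u')
      = closed_segment (V + u * 0) (V + u * (of_real L * (cnj u * u')))"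
    unfolding to_frame by simp
  have point: "V + of_real (h / Im (cnj u * u')) * u'
      = V + u * (of_real (h / Im (cnj u * u')) * (cnj u * u'))"
    unfolding to_frame ..
  show ?thesis
    unfolding edge point closed_segment_unit_frame[OF u] unit_frame_eq[OF u]
    by (rule horizontal_segment_meets_segment_iff[OF turn h L xi])
qed

(* Reversing the orientation of the diagram turns the outgoing edge into an incoming one. *)
lemma fold_crossing_outgoing:
  fixes V u u' x :: complex and L h \<eta> :: real
  assumes u': "cmod u' = 1" and turn: "Im (cnj u * u') \<noteq> 0" and h: "h \<noteq> 0"
    and L: "\<bar>h / Im (cnj u * u')\<bar> \<le> L"
    and eta: "h * Re (cnj u * u') / Im (cnj u * u') < \<eta>"
  shows "(x \<in> closed_segment (V + u' * Complex (h * (1 + Re (cnj u * u')) / Im (cnj u * u')) (- h))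
                (V + u' * Complex \<eta> (- h))
          \<and> x \<in> closed_segment (V - of_real L * u) V)
         \<longleftrightarrow> h * Im (cnj u * u') < 0 \<and> x = V + of_real (h / Im (cnj u * u')) * u"
proof -
  define \<rho> where "\<rho> = cnj u * u'"
  have reflect: "cnj (- u') * (- u) = cnj \<rho>" by (simp add: \<rho>_def)
  have flip: "V - u' * Complex (- c) h = V + u' * Complex c (- h)" for c
    by (simp add: complex_eq_iff)
  have "(x \<in> closed_segment (V + - u' * Complex (- \<eta>) h)
                (V + - u' * Complex (h * (1 + Re (cnj \<rho>)) / Im (cnj \<rho>)) h)
          \<and> x \<in> closed_segment V (V + of_real L * - u))
         \<longleftrightarrow> h * Im (cnj \<rho>) > 0 \<and> x = V + of_real (h / Im (cnj \<rho>)) * - u"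
    using fold_crossing_incoming[of "- u'" "- u" h L "- \<eta>" x V] u' turn h L eta
    unfolding reflect \<rho>_def[symmetric] by simp
  then show ?thesis
    unfolding \<rho>_def[symmetric] by (simp add: flip closed_segment_commute)
qed

lemma eventually_segment_disjoint:
  fixes A B :: "'a::{real_normed_vector,heine_borel}" and p q :: "'b \<Rightarrow> 'a"
  assumes disj: "closed_segment A B \<inter> F = {}" and F: "closed F"
    and p: "(p \<longlongrightarrow> A) G" and q: "(q \<longlongrightarrow> B) G"
  shows "\<forall>\<^sub>F x in G. closed_segment (p x) (q x) \<inter> F = {}"
proof -
  obtain \<delta> where "\<delta> > 0" and sep: "\<forall>z\<in>closed_segment A B. \<forall>y\<in>F. \<delta> \<le> dist z y"
    using separate_compact_closed[OF compact_segment F disj] by blast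
  have "\<forall>\<^sub>F x in G. dist (p x) A < \<delta>" "\<forall>\<^sub>F x in G. dist (q x) B < \<delta>"
    using p q \<open>\<delta> > 0\<close> unfolding tendsto_iff by blast+
  then show ?thesis
  proof eventually_elim
    case (elim x)
    have "y \<notin> F" if y_seg: "y \<in> closed_segment (p x) (q x)" for y
    proof
      assume "y \<in> F"
      obtain t where t: "0 \<le> t" "t \<le> 1" and y: "y = (1 - t) *\<^sub>R p x + t *\<^sub>R q x"
        using y_seg unfolding in_segment by blast
      define z where "z = (1 - t) *\<^sub>R A + t *\<^sub>R B"
      have "z \<in> closed_segment A B" unfolding z_def in_segment using t by blast
      have "y - z = (1 - t) *\<^sub>R (p x - A) + t *\<^sub>R (q x - B)"
        unfolding y z_def by (simp add: scaleR_diff_right)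
      then have "dist z y = norm ((1 - t) *\<^sub>R (p x - A) + t *\<^sub>R (q x - B))"
        by (simp add: dist_norm norm_minus_commute)
      also have "\<dots> \<le> norm ((1 - t) *\<^sub>R (p x - A)) + norm (t *\<^sub>R (q x - B))"
        by (rule norm_triangle_ineq)
      also have "\<dots> = (1 - t) * dist (p x) A + t * dist (q x) B"
        using t by (simp add: dist_norm)
      also have "\<dots> < \<delta>"
        using t elim by (intro convex_bound_lt) auto
      finally have "dist z y < \<delta>" .
      moreover have "\<delta> \<le> dist z y"
        using sep \<open>z \<in> closed_segment A B\<close> \<open>y \<in> F\<close> by blast
      ultimately show False by linarith
    qed
    then show ?case by blast
  qed
qed

lemma eventually_less_tendsto:
  fixes f g :: "'a \<Rightarrow> real"
  assumes "(f \<longlongrightarrow> a) F" "(g \<longlongrightarrow> b) F" "a < b"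
  shows "\<forall>\<^sub>F x in F. f x < g x"
  using order_tendstoD(1)[OF tendsto_diff[OF assms(2,1)], of 0] assms(3) by simp

lemma periodic_mod:
  fixes v :: "nat \<Rightarrow> 'a" and n m :: nat
  assumes periodic: "\<forall>k. v (k + n) = v k"
  shows "v (m mod n) = v m"
proof -
  have "v (k + q * n) = v k" for k q
    by (induction q) (simp_all add: periodic add.assoc[symmetric] add.commute[of n])
  from this[of "m mod n" "m div n"] show ?thesis by simp
qed

lemma mod_add_neq:
  fixes m d n :: nat
  assumes "0 < d" "d < n"
  shows "(m + d) mod n \<noteq> m mod n"
proof
  assume "(m + d) mod n = m mod n"
  then have "n dvd d" using mod_eq_dvd_iff_nat[of m "m + d" n] by simp
  then show False using assms by (meson nat_dvd_not_less)
qed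

(* e^{i theta}, where theta is the turning angle of the diagram at v (j + 1). *)
definition turn :: "(nat \<Rightarrow> complex) \<Rightarrow> nat \<Rightarrow> complex" where
  "turn v j = cnj (unitdir v j) * unitdir v (j + 1)"

lemma unitdir_norm: "v (Suc j) \<noteq> v j \<Longrightarrow> cmod (unitdir v j) = 1"
  by (simp add: unitdir_def edir_def norm_divide)

lemma edir_eq_unitdir: "edir v j = of_real (cmod (edir v j)) * unitdir v j"
  by (cases "edir v j = 0") (simp_all add: unitdir_def)

lemma next_vertex: "v (j + 1) = v j + of_real (cmod (edir v j)) * unitdir v j"
  unfolding edir_eq_unitdir[symmetric] by (simp add: edir_def)

lemma cross_edir_turn:
  "cross (edir v j) (edir v (j + 1)) = cmod (edir v j) * cmod (edir v (j + 1)) * Im (turn v j)"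
proof -
  have "cross (edir v j) (edir v (j + 1)) = cross (of_real (cmod (edir v j)) * unitdir v j)
      (of_real (cmod (edir v (j + 1))) * unitdir v (j + 1))"
    by (simp only: edir_eq_unitdir[symmetric])
  also have "\<dots> = cmod (edir v j) * cmod (edir v (j + 1)) * Im (turn v j)"
    by (simp add: cross_def turn_def algebra_simps)
  finally show ?thesis .
qed

lemma boff_Suc: "boff s w (Suc j) = - boff s w j"
  by (simp add: boff_def)

lemma tendsto_boff: "((\<lambda>w. boff s w j) \<longlongrightarrow> 0) (at_right 0)"
  unfolding boff_def by (auto intro!: tendsto_eq_intros)

lemma bfold_incoming:
  assumes "v (j + 1) \<noteq> v j" and turn: "Im (turn v j) \<noteq> 0"
  shows "bfold v s w j (j + 1) = v (j + 1) + unitdir v j *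
           Complex (boff s w j * (1 + Re (turn v j)) / Im (turn v j)) (boff s w j)"
proof -
  have u: "cmod (unitdir v j) = 1" using assms by (simp add: unitdir_norm)
  have "fold_dir v (j + 1) = unitdir v j * (1 + turn v j)"
    using cnj_mult_unit[OF u] by (simp add: fold_dir_def turn_def algebra_simps)
  moreover have "v (j + 1) - v j = of_real (cmod (edir v j)) * unitdir v j"
    using edir_eq_unitdir[of v j] by (simp add: edir_def)
  ultimately show ?thesis
    unfolding bfold_def lnormal_def using line_meet_unit_frame[OF u, of "1 + turn v j"] turn by simp
qed

lemma bfold_outgoing:
  assumes "v (j + 2) \<noteq> v (j + 1)" and turn: "Im (turn v j) \<noteq> 0"
  shows "bfold v s w (j + 1) (j + 1) = v (j + 1) + unitdir v (j + 1) *
           Complex (boff s w j * (1 + Re (turn v j)) / Im (turn v j)) (- boff s w j)"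
proof -
  have u: "cmod (unitdir v (j + 1)) = 1" using assms by (simp add: unitdir_norm)
  have "fold_dir v (j + 1) = unitdir v (j + 1) * (1 + cnj (turn v j))"
    using cnj_mult_unit[OF u] by (simp add: fold_dir_def turn_def algebra_simps)
  moreover have "Im (1 + cnj (turn v j)) \<noteq> 0" using turn by simp
  ultimately show ?thesis
    unfolding bfold_def lnormal_def
    using line_meet_unit_frame[OF u, of "1 + cnj (turn v j)" "v (j + 1)" "v (j + 1)" 0 "boff s w (j + 1)"]
    by (simp add: boff_Suc)
qed

lemma fold_crossing_unique:
  fixes v :: "nat \<Rightarrow> complex" and j :: nat and s w \<xi> \<eta> :: real
  defines "h \<equiv> boff s w j" and "\<rho> \<equiv> turn v j"
    and "P \<equiv> closed_segment (v (j + 1) + unitdir v j * Complex \<xi> (boff s w j)) (bfold v s w j (j + 1))"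
    and "Q \<equiv> closed_segment (bfold v s w (j + 1) (j + 1))
                 (v (j + 1) + unitdir v (j + 1) * Complex \<eta> (- boff s w j))"
  assumes nondeg: "v (j + 1) \<noteq> v j" "v (j + 2) \<noteq> v (j + 1)"
    and turn: "Im \<rho> \<noteq> 0" and h: "h \<noteq> 0"
    and short: "\<bar>h / Im \<rho>\<bar> \<le> cmod (edir v j)" "\<bar>h / Im \<rho>\<bar> \<le> cmod (edir v (j + 1))"
    and xi: "\<xi> < h * Re \<rho> / Im \<rho>" and eta: "h * Re \<rho> / Im \<rho> < \<eta>"
  shows "\<exists>x. P \<inter> closed_segment (v (j + 1)) (v (j + 2)) = {x} \<and> Q \<inter> closed_segment (v j) (v (j + 1)) = {}
           \<or> P \<inter> closed_segment (v (j + 1)) (v (j + 2)) = {} \<and> Q \<inter> closed_segment (v j) (v (j + 1)) = {x}"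
proof -
  have u: "cmod (unitdir v j) = 1" and u': "cmod (unitdir v (j + 1)) = 1"
    using nondeg by (simp_all add: unitdir_norm)
  have next_edge: "closed_segment (v (j + 1)) (v (j + 2))
      = closed_segment (v (j + 1)) (v (j + 1) + of_real (cmod (edir v (j + 1))) * unitdir v (j + 1))"
    using edir_eq_unitdir[of v "j + 1"] by (simp add: edir_def algebra_simps)
  have prev_edge: "closed_segment (v j) (v (j + 1))
      = closed_segment (v (j + 1) - of_real (cmod (edir v j)) * unitdir v j) (v (j + 1))"
    unfolding edir_eq_unitdir[symmetric] by (simp add: edir_def)
  define X where "X = v (j + 1) + of_real (h / Im \<rho>) * unitdir v (j + 1)"
  define X' where "X' = v (j + 1) + of_real (h / Im \<rho>) * unitdir v j"
  have incoming: "x \<in> P \<inter> closed_segment (v (j + 1)) (v (j + 2)) \<longleftrightarrow> h * Im \<rho> > 0 \<and> x = X" for x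
    unfolding P_def bfold_incoming[OF nondeg(1) turn[unfolded \<rho>_def]] next_edge Int_iff h_def[symmetric]
    using fold_crossing_incoming[OF u, of "unitdir v (j + 1)"] turn h short(2) xi
    by (simp add: \<rho>_def turn_def X_def)
  have outgoing: "x \<in> Q \<inter> closed_segment (v j) (v (j + 1)) \<longleftrightarrow> h * Im \<rho> < 0 \<and> x = X'" for x
    unfolding Q_def bfold_outgoing[OF nondeg(2) turn[unfolded \<rho>_def]] prev_edge Int_iff h_def[symmetric]
    using fold_crossing_outgoing[OF u', of "unitdir v j"] turn h short(1) eta
    by (simp add: \<rho>_def turn_def X'_def)
  have "h * Im \<rho> \<noteq> 0" using turn h by simp
  then consider "h * Im \<rho> > 0" | "h * Im \<rho> < 0" by linarith
  then show ?thesis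
  proof cases
    case 1
    then show ?thesis
      by (intro exI[of _ X] disjI1 conjI set_eqI) (simp_all only: incoming outgoing, auto)
  next
    case 2
    then show ?thesis
      by (intro exI[of _ X'] disjI2 conjI set_eqI) (simp_all only: incoming outgoing, auto)
  qed
qed

(* The (layer, edge) pairs whose boundary and diagram segments meet at the fold at v (j + 1). *)
definition fold_pairs :: "nat \<Rightarrow> nat \<Rightarrow> (nat \<times> nat) set" where
  "fold_pairs n j = {(j, (j + 1) mod n), (j + 1, j mod n)}"

lemma fold_pairs_disjoint: "3 \<le> n \<Longrightarrow> fold_pairs n j \<inter> fold_pairs n (j + 1) = {}"
  using mod_add_neq[of 2 n j] by (auto simp: fold_pairs_def)

lemma tendsto_bfold_incoming:
  assumes "v (j + 1) \<noteq> v j" and "Im (turn v j) \<noteq> 0"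
  shows "((\<lambda>w. bfold v s w j (j + 1)) \<longlongrightarrow> v (j + 1)) (at_right 0)"
  unfolding bfold_incoming[OF assms]
  using assms(2) by (auto intro!: tendsto_eq_intros tendsto_boff simp: Complex_eq_0)

lemma tendsto_bfold_outgoing:
  assumes "v (j + 2) \<noteq> v (j + 1)" and "Im (turn v j) \<noteq> 0"
  shows "((\<lambda>w. bfold v s w (j + 1) (j + 1)) \<longlongrightarrow> v (j + 1)) (at_right 0)"
  unfolding bfold_outgoing[OF assms]
  using assms(2) by (auto intro!: tendsto_eq_intros tendsto_boff simp: Complex_eq_0)

lemma eventually_fold_conditions:
  fixes \<xi> \<eta> :: "real \<Rightarrow> real" and \<rho> :: complex
  assumes s: "s \<noteq> 0" and L: "0 < L1" "0 < L2"
    and xi: "(\<xi> \<longlongrightarrow> \<xi>0) (at_right 0)" "\<xi>0 < 0" and eta: "(\<eta> \<longlongrightarrow> \<eta>0) (at_right 0)" "0 < \<eta>0"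
  shows "\<forall>\<^sub>F w in at_right 0. boff s w j \<noteq> 0
           \<and> \<bar>boff s w j / Im \<rho>\<bar> \<le> L1 \<and> \<bar>boff s w j / Im \<rho>\<bar> \<le> L2
           \<and> \<xi> w < boff s w j * Re \<rho> / Im \<rho> \<and> boff s w j * Re \<rho> / Im \<rho> < \<eta> w"
proof -
  have offset: "((\<lambda>w. boff s w j / Im \<rho>) \<longlongrightarrow> 0) (at_right 0)"
    by (rule tendsto_divide_zero[OF tendsto_boff])
  have offset_re: "((\<lambda>w. boff s w j * Re \<rho> / Im \<rho>) \<longlongrightarrow> 0) (at_right 0)"
    by (rule tendsto_divide_zero[OF tendsto_mult_left_zero[OF tendsto_boff]])
  have nonzero: "\<forall>\<^sub>F w in at_right 0. boff s w j \<noteq> 0"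
    using eventually_at_right_less[of 0] by eventually_elim (simp add: boff_def s)
  have short: "\<forall>\<^sub>F w in at_right 0. \<bar>boff s w j / Im \<rho>\<bar> < L" if "0 < L" for L
    using order_tendstoD(2)[OF tendsto_rabs[OF offset]] that by simp
  show ?thesis
    using nonzero short[OF L(1)] short[OF L(2)]
      eventually_less_tendsto[OF xi(1) offset_re xi(2)] eventually_less_tendsto[OF offset_re eta]
    by eventually_elim (auto simp: less_imp_le)
qed

locale folded_piece =
  fixes v :: "nat \<Rightarrow> complex" and n i :: nat and a b :: complex
  assumes n3: "n \<ge> 3"
    and periodic: "\<forall>k. v (k + n) = v k"
    and nondeg: "\<forall>k. v (Suc k) \<noteq> v k"
    and fold1: "cross (edir v i) (edir v (i + 1)) \<noteq> 0"
    and fold2: "cross (edir v (i + 1)) (edir v (i + 2)) \<noteq> 0"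
    and a_in: "a \<in> open_segment (v i) (v (i + 1))"
    and b_in: "b \<in> open_segment (v (i + 2)) (v (i + 3))"
    and simple_other: "\<forall>k<n. k \<notin> {i mod n, (i + 1) mod n, (i + 2) mod n} \<longrightarrow>
        closed_segment (v k) (v (Suc k)) \<inter>
          (closed_segment a (v (i + 1)) \<union> closed_segment (v (i + 1)) (v (i + 2))
           \<union> closed_segment (v (i + 2)) b) = {}"
    and simple_first: "closed_segment (v i) (v (i + 1)) \<inter>
          (closed_segment a (v (i + 1)) \<union> closed_segment (v (i + 1)) (v (i + 2))
           \<union> closed_segment (v (i + 2)) b) = closed_segment a (v (i + 1))"
    and simple_last: "closed_segment (v (i + 2)) (v (i + 3)) \<inter>
          (closed_segment a (v (i + 1)) \<union> closed_segment (v (i + 1)) (v (i + 2))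
           \<union> closed_segment (v (i + 2)) b) = closed_segment (v (i + 2)) b"
    and simple_ends: "closed_segment a (v (i + 1)) \<inter> closed_segment (v (i + 2)) b = {}"
begin

abbreviation edge :: "nat \<Rightarrow> complex set" where
  "edge k \<equiv> closed_segment (v k) (v (Suc k))"

lemma edge_mod: "edge (m mod n) = edge m"
  using periodic_mod[OF periodic, of m] periodic_mod[OF periodic, of "Suc m"]
    periodic_mod[OF periodic, of "Suc (m mod n)"]
  by (simp add: mod_Suc_eq)

lemma edir_mod: "edir v (m mod n) = edir v m"
  using periodic_mod[OF periodic, of m] periodic_mod[OF periodic, of "Suc m"]
    periodic_mod[OF periodic, of "Suc (m mod n)"]
  by (simp add: edir_def mod_Suc_eq)

lemma vertices_neq: "v (j + 1) \<noteq> v j" "v (j + 2) \<noteq> v (j + 1)"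
  using nondeg[rule_format, of j] nondeg[rule_format, of "j + 1"] by simp_all

lemma turn_nonzero: "Im (turn v i) \<noteq> 0" "Im (turn v (i + 1)) \<noteq> 0"
  using fold1 fold2 cross_edir_turn[of v i] cross_edir_turn[of v "i + 1"] by (auto simp: add.assoc)

lemma a_on_first_edge:
  obtains \<alpha> where "\<alpha> > 0" "a = v (i + 1) - of_real \<alpha> * unitdir v i"
proof -
  obtain t where t: "0 < t" "t < 1" "a = (1 - t) *\<^sub>R v i + t *\<^sub>R v (i + 1)"
    using a_in unfolding in_segment by blast
  have "a = v (i + 1) - of_real ((1 - t) * cmod (edir v i)) * unitdir v i"
    using t(3) next_vertex[of v i] by (simp add: scaleR_conv_of_real algebra_simps)
  moreover have "(1 - t) * cmod (edir v i) > 0" using t nondeg by (simp add: edir_def)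
  ultimately show ?thesis using that by blast
qed

lemma b_on_last_edge:
  obtains \<beta> where "\<beta> > 0" "b = v (i + 2) + of_real \<beta> * unitdir v (i + 2)"
proof -
  obtain t where t: "0 < t" "t < 1" "b = (1 - t) *\<^sub>R v (i + 2) + t *\<^sub>R v (i + 3)"
    using b_in unfolding in_segment by blast
  have "v (i + 3) = v (i + 2) + of_real (cmod (edir v (i + 2))) * unitdir v (i + 2)"
    using next_vertex[of v "i + 2"] by (simp add: numeral_3_eq_3)
  then have "b = v (i + 2) + of_real (t * cmod (edir v (i + 2))) * unitdir v (i + 2)"
    using t(3) by (simp add: scaleR_conv_of_real algebra_simps)
  moreover have "t * cmod (edir v (i + 2)) > 0" using t nondeg by (simp add: edir_def)
  ultimately show ?thesis using that by blast
qed

lemma first_part_avoids_edges: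
  assumes "k < n" "k \<notin> {i mod n, (i + 1) mod n}"
  shows "closed_segment a (v (i + 1)) \<inter> edge k = {}"
proof (cases "k = (i + 2) mod n")
  case True
  then have "edge k = closed_segment (v (i + 2)) (v (i + 3))"
    using edge_mod[of "i + 2"] by (simp add: numeral_3_eq_3)
  then show ?thesis using simple_last simple_ends by blast
next
  case False
  then show ?thesis using simple_other assms by blast
qed

lemma middle_part_avoids_edges:
  assumes "k < n" "k \<notin> {i mod n, (i + 1) mod n, (i + 2) mod n}"
  shows "closed_segment (v (i + 1)) (v (i + 2)) \<inter> edge k = {}"
  using simple_other assms by blast

lemma last_part_avoids_edges:
  assumes "k < n" "k \<notin> {(i + 1) mod n, (i + 2) mod n}"
  shows "closed_segment (v (i + 2)) b \<inter> edge k = {}"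
proof (cases "k = i mod n")
  case True
  then have "edge k = closed_segment (v i) (v (i + 1))"
    using edge_mod[of i] by simp
  then show ?thesis using simple_first simple_ends by blast
next
  case False
  then show ?thesis using simple_other assms by blast
qed

lemma xsign_at_fold:
  assumes layers: "\<forall>j<n. \<forall>k<n. j \<noteq> k \<longrightarrow> (abv j k \<longleftrightarrow> \<not> abv k j)"
    and turn: "cross (edir v j) (edir v (j + 1)) \<noteq> 0" and pair: "(p, q) \<in> fold_pairs n j"
  shows "xsign v n abv p q = of_int (fold_sign v n abv (j + 1))"
proof -
  have "(j + 1) mod n \<noteq> j mod n" using mod_add_neq[of 1 n j] n3 by simp
  then have layer_order: "abv ((j + 1) mod n) (j mod n) \<longleftrightarrow> \<not> abv (j mod n) ((j + 1) mod n)"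
    using layers[rule_format, of "(j + 1) mod n" "j mod n"] n3 by simp
  define A where "A = abv (j mod n) ((j + 1) mod n)"
  define X where "X = cross (edir v j) (edir v (j + 1))"
  have swap: "cross (edir v (j + 1)) (edir v j) = - X"
    unfolding X_def by (rule cross_swap)
  have "fold_sign v n abv (j + 1) = (if X > 0 \<longleftrightarrow> A then 1 else -1)"
    by (simp add: fold_sign_def left_fold_def underfold_def A_def X_def)
  moreover have "xsign v n abv j ((j + 1) mod n) = (if A then sgn X else - sgn X)"
    unfolding xsign_def edir_mod swap by (simp add: A_def X_def)
  moreover have "xsign v n abv (j + 1) (j mod n) = (if A then sgn X else - sgn X)"
    unfolding xsign_def edir_mod swap layer_order by (simp add: A_def X_def)
  ultimately show ?thesis
    using pair turn[folded X_def] by (auto simp: fold_pairs_def sgn_if)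
qed

lemma crossings_at_fold:
  assumes "j = i \<or> j = i + 1"
  shows "{c \<in> piece_crossings v n s w i a b. (fst c, fst (snd c)) \<in> fold_pairs n j} =
    {j} \<times> {(j + 1) mod n} \<times> (piece_bseg v s w i a b j \<inter> edge (j + 1)) \<union>
    {j + 1} \<times> {j mod n} \<times> (piece_bseg v s w i a b (j + 1) \<inter> edge j)"
proof -
  \<comment> \<open>Stated for abstract \<open>B\<close> and \<open>E\<close>, so that the automation does not unfold the segments.\<close>
  have select: "{c \<in> {(p, q, x). p \<in> I \<and> q < n \<and> q \<noteq> p mod n \<and> x \<in> B p \<inter> E q}.
      (fst c, fst (snd c)) \<in> {(j, k'), (k, j')}} = {j} \<times> {k'} \<times> (B j \<inter> E k') \<union> {k} \<times> {j'} \<times> (B k \<inter> E j')"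
    if "j \<in> I" "k \<in> I" "k' < n" "j' < n" "k' \<noteq> j mod n" "j' \<noteq> k mod n"
    for I B E k k' j'
    using that by auto
  have neq: "(j + 1) mod n \<noteq> j mod n" using mod_add_neq[of 1 n j] n3 by simp
  have bounds: "(j + 1) mod n < n" "j mod n < n" using n3 by simp_all
  have layers: "j \<in> {i, i + 1, i + 2}" "j + 1 \<in> {i, i + 1, i + 2}" using assms by auto
  have "{c \<in> piece_crossings v n s w i a b. (fst c, fst (snd c)) \<in> fold_pairs n j} =
    {j} \<times> {(j + 1) mod n} \<times> (piece_bseg v s w i a b j \<inter> edge ((j + 1) mod n)) \<union>
    {j + 1} \<times> {j mod n} \<times> (piece_bseg v s w i a b (j + 1) \<inter> edge (j mod n))"
    unfolding piece_crossings_def fold_pairs_def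
    by (rule select[OF layers bounds neq neq[symmetric]])
  then show ?thesis
    unfolding edge_mod .
qed

lemma eventually_unique_crossing_at_fold:
  fixes \<xi> \<eta> :: "real \<Rightarrow> real"
  assumes s: "s \<noteq> 0" and j: "j = i \<or> j = i + 1"
    and incoming: "\<And>w. piece_bseg v s w i a b j = closed_segment
          (v (j + 1) + unitdir v j * Complex (\<xi> w) (boff s w j)) (bfold v s w j (j + 1))"
    and outgoing: "\<And>w. piece_bseg v s w i a b (j + 1) = closed_segment
          (bfold v s w (j + 1) (j + 1)) (v (j + 1) + unitdir v (j + 1) * Complex (\<eta> w) (- boff s w j))"
    and xi: "(\<xi> \<longlongrightarrow> \<xi>0) (at_right 0)" "\<xi>0 < 0" and eta: "(\<eta> \<longlongrightarrow> \<eta>0) (at_right 0)" "0 < \<eta>0"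
  shows "\<forall>\<^sub>F w in at_right 0.
           \<exists>c. {c \<in> piece_crossings v n s w i a b. (fst c, fst (snd c)) \<in> fold_pairs n j} = {c}"
proof -
  have turn: "Im (turn v j) \<noteq> 0" using j turn_nonzero by auto
  have L: "0 < cmod (edir v j)" "0 < cmod (edir v (j + 1))" using nondeg by (simp_all add: edir_def)
  have next_edge: "edge (j + 1) = closed_segment (v (j + 1)) (v (j + 2))"
    by (simp add: numeral_2_eq_2)
  have this_edge: "edge j = closed_segment (v j) (v (j + 1))"
    by simp
  show ?thesis
    using eventually_fold_conditions[OF s L xi eta, of j "turn v j"]
  proof eventually_elim
    case (elim w)
    have "\<exists>x. piece_bseg v s w i a b j \<inter> edge (j + 1) = {x}
          \<and> piece_bseg v s w i a b (j + 1) \<inter> edge j = {}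
        \<or> piece_bseg v s w i a b j \<inter> edge (j + 1) = {}
          \<and> piece_bseg v s w i a b (j + 1) \<inter> edge j = {x}"
      unfolding incoming outgoing next_edge this_edge
      using elim by (intro fold_crossing_unique[OF vertices_neq turn]) auto
    then show ?case
      unfolding crossings_at_fold[OF j] by (elim exE disjE conjE) simp_all
  qed
qed

lemma eventually_unique_crossing_at_first_fold:
  assumes s: "s \<noteq> 0"
  shows "\<forall>\<^sub>F w in at_right 0.
           \<exists>c. {c \<in> piece_crossings v n s w i a b. (fst c, fst (snd c)) \<in> fold_pairs n i} = {c}"
proof -
  obtain \<alpha> where \<alpha>: "\<alpha> > 0" "a = v (i + 1) - of_real \<alpha> * unitdir v i"
    by (rule a_on_first_edge)
  define L where "L = cmod (edir v (i + 1))"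
  define \<eta> where "\<eta> w = L + boff s w (i + 1) * (1 + Re (turn v (i + 1))) / Im (turn v (i + 1))" for w
  have incoming: "piece_bseg v s w i a b i = closed_segment
      (v (i + 1) + unitdir v i * Complex (- \<alpha>) (boff s w i)) (bfold v s w i (i + 1))" for w
    by (simp add: piece_bseg_def lnormal_def \<alpha>(2) Complex_eq algebra_simps)
  have "bfold v s w (i + 1) (i + 2) = v (i + 1) + unitdir v (i + 1) * Complex (\<eta> w) (- boff s w i)" for w
    using bfold_incoming[OF vertices_neq(1) turn_nonzero(2), of s w] next_vertex[of v "i + 1"]
    by (simp add: \<eta>_def L_def boff_Suc Complex_eq algebra_simps)
  then have outgoing: "piece_bseg v s w i a b (i + 1) = closed_segment
      (bfold v s w (i + 1) (i + 1)) (v (i + 1) + unitdir v (i + 1) * Complex (\<eta> w) (- boff s w i))" for w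
    by (simp add: piece_bseg_def)
  have "(\<eta> \<longlongrightarrow> L) (at_right 0)"
    unfolding \<eta>_def[abs_def] using turn_nonzero(2) by (auto intro!: tendsto_eq_intros tendsto_boff)
  moreover have "0 < L" using nondeg by (simp add: L_def edir_def)
  ultimately show ?thesis
    using eventually_unique_crossing_at_fold[OF s _ incoming outgoing, of "- \<alpha>" L] \<alpha>(1) by simp
qed

lemma eventually_unique_crossing_at_second_fold:
  assumes s: "s \<noteq> 0"
  shows "\<forall>\<^sub>F w in at_right 0.
           \<exists>c. {c \<in> piece_crossings v n s w i a b. (fst c, fst (snd c)) \<in> fold_pairs n (i + 1)} = {c}"
proof -
  obtain \<beta> where \<beta>: "\<beta> > 0" "b = v (i + 2) + of_real \<beta> * unitdir v (i + 2)"
    by (rule b_on_last_edge)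
  define L where "L = cmod (edir v (i + 1))"
  define \<xi> where "\<xi> w = - L + boff s w i * (1 + Re (turn v i)) / Im (turn v i)" for w
  \<comment> \<open>Indices are written \<open>i + 1 + 1\<close> to match the instance \<open>j = i + 1\<close> below.\<close>
  have "bfold v s w (i + 1) (i + 1)
      = v (i + 1 + 1) + unitdir v (i + 1) * Complex (\<xi> w) (boff s w (i + 1))" for w
    using bfold_outgoing[OF vertices_neq(2) turn_nonzero(1), of s w] next_vertex[of v "i + 1"]
    by (simp add: \<xi>_def L_def boff_Suc Complex_eq algebra_simps)
  then have incoming: "piece_bseg v s w i a b (i + 1) = closed_segment
      (v (i + 1 + 1) + unitdir v (i + 1) * Complex (\<xi> w) (boff s w (i + 1)))
      (bfold v s w (i + 1) (i + 1 + 1))" for w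
    by (simp add: piece_bseg_def)
  have outgoing: "piece_bseg v s w i a b (i + 1 + 1) =
      closed_segment (bfold v s w (i + 1 + 1) (i + 1 + 1))
        (v (i + 1 + 1) + unitdir v (i + 1 + 1) * Complex \<beta> (- boff s w (i + 1)))" for w
    by (simp add: piece_bseg_def lnormal_def \<beta>(2) boff_Suc Complex_eq algebra_simps)
  have "(\<xi> \<longlongrightarrow> - L) (at_right 0)"
    unfolding \<xi>_def[abs_def] using turn_nonzero(1) by (auto intro!: tendsto_eq_intros tendsto_boff)
  moreover have "0 < L" using nondeg by (simp add: L_def edir_def)
  ultimately show ?thesis
    using eventually_unique_crossing_at_fold[OF s _ incoming outgoing, of "- L" \<beta>] \<beta>(1) by simp
qed

lemma eventually_avoids_edges:
  assumes "\<And>k. k < n \<Longrightarrow> k \<notin> K \<Longrightarrow> closed_segment A B \<inter> edge k = {}"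
    and "(p \<longlongrightarrow> A) (at_right 0)" "(q \<longlongrightarrow> B) (at_right 0)"
  shows "\<forall>\<^sub>F w in at_right 0. \<forall>k<n. k \<notin> K \<longrightarrow> closed_segment (p w) (q w) \<inter> edge k = {}"
proof -
  have "\<forall>\<^sub>F w in at_right 0. \<forall>k\<in>{k. k < n \<and> k \<notin> K}. closed_segment (p w) (q w) \<inter> edge k = {}"
    using assms by (intro eventually_ball_finite ballI eventually_segment_disjoint) auto
  then show ?thesis by (rule eventually_mono) blast
qed

lemma eventually_boundary_avoids_far_edges:
  shows "\<forall>\<^sub>F w in at_right 0. \<forall>k<n. k \<notin> {i mod n, (i + 1) mod n} \<longrightarrow>
           piece_bseg v s w i a b i \<inter> edge k = {}"
    and "\<forall>\<^sub>F w in at_right 0. \<forall>k<n. k \<notin> {i mod n, (i + 1) mod n, (i + 2) mod n} \<longrightarrow>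
           piece_bseg v s w i a b (i + 1) \<inter> edge k = {}"
    and "\<forall>\<^sub>F w in at_right 0. \<forall>k<n. k \<notin> {(i + 1) mod n, (i + 2) mod n} \<longrightarrow>
           piece_bseg v s w i a b (i + 2) \<inter> edge k = {}"
proof -
  have lim_a: "((\<lambda>w. a + of_real (boff s w i) * lnormal v i) \<longlongrightarrow> a) (at_right 0)"
    and lim_b: "((\<lambda>w. b + of_real (boff s w (i + 2)) * lnormal v (i + 2)) \<longlongrightarrow> b) (at_right 0)"
    by (auto intro!: tendsto_eq_intros tendsto_boff)
  note lim_fold = tendsto_bfold_incoming[OF vertices_neq(1) turn_nonzero(1)]
    tendsto_bfold_outgoing[OF vertices_neq(2) turn_nonzero(1)]
    tendsto_bfold_incoming[OF vertices_neq(1) turn_nonzero(2), unfolded add.assoc one_add_one]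
    tendsto_bfold_outgoing[OF vertices_neq(2) turn_nonzero(2), unfolded add.assoc one_add_one]
  have bseg: "piece_bseg v s w i a b i =
      closed_segment (a + of_real (boff s w i) * lnormal v i) (bfold v s w i (i + 1))"
    "piece_bseg v s w i a b (i + 1) =
      closed_segment (bfold v s w (i + 1) (i + 1)) (bfold v s w (i + 1) (i + 2))"
    "piece_bseg v s w i a b (i + 2) = closed_segment (bfold v s w (i + 2) (i + 2))
      (b + of_real (boff s w (i + 2)) * lnormal v (i + 2))"
    for w by (simp_all add: piece_bseg_def)
  show "\<forall>\<^sub>F w in at_right 0. \<forall>k<n. k \<notin> {i mod n, (i + 1) mod n} \<longrightarrow>
      piece_bseg v s w i a b i \<inter> edge k = {}"
    unfolding bseg by (rule eventually_avoids_edges[OF first_part_avoids_edges lim_a lim_fold(1)])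
  show "\<forall>\<^sub>F w in at_right 0. \<forall>k<n. k \<notin> {i mod n, (i + 1) mod n, (i + 2) mod n} \<longrightarrow>
      piece_bseg v s w i a b (i + 1) \<inter> edge k = {}"
    unfolding bseg by (rule eventually_avoids_edges[OF middle_part_avoids_edges lim_fold(2,3)])
  show "\<forall>\<^sub>F w in at_right 0. \<forall>k<n. k \<notin> {(i + 1) mod n, (i + 2) mod n} \<longrightarrow>
      piece_bseg v s w i a b (i + 2) \<inter> edge k = {}"
    unfolding bseg by (rule eventually_avoids_edges[OF last_part_avoids_edges lim_fold(4) lim_b])
qed

lemma eventually_crossings_at_folds:
  "\<forall>\<^sub>F w in at_right 0. \<forall>c \<in> piece_crossings v n s w i a b.
     (fst c, fst (snd c)) \<in> fold_pairs n i \<union> fold_pairs n (i + 1)"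
  using eventually_boundary_avoids_far_edges[of s]
proof eventually_elim
  case (elim w)
  show ?case
  proof
    fix c assume "c \<in> piece_crossings v n s w i a b"
    then obtain p q x where c: "c = (p, q, x)" and p: "p \<in> {i, i + 1, i + 2}"
      and q: "q < n" "q \<noteq> p mod n" and x: "x \<in> piece_bseg v s w i a b p \<inter> edge q"
      unfolding piece_crossings_def by blast
    then show "(fst c, fst (snd c)) \<in> fold_pairs n i \<union> fold_pairs n (i + 1)"
      using elim by (auto simp: fold_pairs_def)
  qed
qed

lemma eventually_piece_crossings:
  assumes "s \<noteq> 0"
  shows "\<forall>\<^sub>F w in at_right 0. \<exists>c1 c2. piece_crossings v n s w i a b = {c1, c2}
           \<and> (fst c1, fst (snd c1)) \<in> fold_pairs n i \<and> (fst c2, fst (snd c2)) \<in> fold_pairs n (i + 1)"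
  using eventually_crossings_at_folds[of s] eventually_unique_crossing_at_first_fold[OF assms]
    eventually_unique_crossing_at_second_fold[OF assms]
proof eventually_elim
  case (elim w)
  from elim(2,3) obtain c1 c2 where
    c1: "{c \<in> piece_crossings v n s w i a b. (fst c, fst (snd c)) \<in> fold_pairs n i} = {c1}" and
    c2: "{c \<in> piece_crossings v n s w i a b. (fst c, fst (snd c)) \<in> fold_pairs n (i + 1)} = {c2}"
    by blast
  have "piece_crossings v n s w i a b = {c1, c2}"
    using elim(1) c1 c2 by blast
  then show ?case using c1 c2 by blast
qed

lemma eventually_piece_contribution:
  assumes layers: "\<forall>j<n. \<forall>k<n. j \<noteq> k \<longrightarrow> (abv j k \<longleftrightarrow> \<not> abv k j)" and s: "s \<noteq> 0"
  shows "\<forall>\<^sub>F w in at_right 0. piece_contribution v n abv s w i a b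
           = (of_int (fold_sign v n abv (i + 1)) + of_int (fold_sign v n abv (i + 2))) / 2"
  using eventually_piece_crossings[OF s]
proof eventually_elim
  case (elim w)
  then obtain c1 c2 where crossings: "piece_crossings v n s w i a b = {c1, c2}"
    and pairs: "(fst c1, fst (snd c1)) \<in> fold_pairs n i" "(fst c2, fst (snd c2)) \<in> fold_pairs n (i + 1)"
    by blast
  have "c1 \<noteq> c2" using pairs fold_pairs_disjoint[OF n3, of i] by auto
  moreover have "xsign v n abv (fst c1) (fst (snd c1)) = of_int (fold_sign v n abv (i + 1))"
    by (rule xsign_at_fold[OF layers fold1 pairs(1)])
  moreover have "xsign v n abv (fst c2) (fst (snd c2)) = of_int (fold_sign v n abv (i + 2))"
    by (rule xsign_at_fold[of abv "i + 1", unfolded add.assoc one_add_one, OF layers fold2 pairs(2)])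
  ultimately show ?case
    unfolding piece_contribution_def crossings by simp
qed

end

theorem lemma4p3:
  fixes v :: "nat \<Rightarrow> complex" and n i :: nat and abv :: "nat \<Rightarrow> nat \<Rightarrow> bool"
    and a b :: complex and s :: real
  assumes even: "even n" and n3: "n \<ge> 3"
    and periodic: "\<forall>k. v (k + n) = v k"
    and nondeg: "\<forall>k. v (Suc k) \<noteq> v k"
    and layers: "\<forall>j<n. \<forall>k<n. j \<noteq> k \<longrightarrow> (abv j k \<longleftrightarrow> \<not> abv k j)"
    and fold1: "cross (edir v i) (edir v (i + 1)) \<noteq> 0"
    and fold2: "cross (edir v (i + 1)) (edir v (i + 2)) \<noteq> 0"
    and a_in: "a \<in> open_segment (v i) (v (i + 1))"
    and b_in: "b \<in> open_segment (v (i + 2)) (v (i + 3))"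
    and simple_other: "\<forall>k<n. k \<notin> {i mod n, (i + 1) mod n, (i + 2) mod n} \<longrightarrow>
        closed_segment (v k) (v (Suc k)) \<inter>
          (closed_segment a (v (i + 1)) \<union> closed_segment (v (i + 1)) (v (i + 2))
           \<union> closed_segment (v (i + 2)) b) = {}"
    and simple_first: "closed_segment (v i) (v (i + 1)) \<inter>
          (closed_segment a (v (i + 1)) \<union> closed_segment (v (i + 1)) (v (i + 2))
           \<union> closed_segment (v (i + 2)) b) = closed_segment a (v (i + 1))"
    and simple_last: "closed_segment (v (i + 2)) (v (i + 3)) \<inter>
          (closed_segment a (v (i + 1)) \<union> closed_segment (v (i + 1)) (v (i + 2))
           \<union> closed_segment (v (i + 2)) b) = closed_segment (v (i + 2)) b"
    and simple_ends: "closed_segment a (v (i + 1)) \<inter> closed_segment (v (i + 2)) b = {}"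
    and s: "s = 1 \<or> s = -1"
  shows "\<exists>w0>0. \<forall>w. 0 < w \<and> w < w0 \<longrightarrow>
           (piece_contribution v n abv s w i a b \<in> {1, -1} \<longleftrightarrow>
            fold_sign v n abv (i + 1) = fold_sign v n abv (i + 2))"
proof -
  interpret piece: folded_piece v n i a b
    by unfold_locales (fact n3 periodic nondeg fold1 fold2 a_in b_in
        simple_other simple_first simple_last simple_ends)+
  have "s \<noteq> 0" using s by auto
  then obtain w0 where "w0 > 0" and contribution: "\<And>w. 0 < w \<Longrightarrow> w < w0 \<Longrightarrow>
      piece_contribution v n abv s w i a b
        = (of_int (fold_sign v n abv (i + 1)) + of_int (fold_sign v n abv (i + 2))) / 2"
    using piece.eventually_piece_contribution[OF layers] unfolding eventually_at_right_field by blast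
  have "fold_sign v n abv (i + 1) \<in> {1, -1}" "fold_sign v n abv (i + 2) \<in> {1, -1}"
    by (simp_all add: fold_sign_def)
  then have average:
    "(of_int (fold_sign v n abv (i + 1)) + of_int (fold_sign v n abv (i + 2))) / 2 \<in> {1, -1::real}
      \<longleftrightarrow> fold_sign v n abv (i + 1) = fold_sign v n abv (i + 2)"
    by auto
  show ?thesis
  proof (intro exI[of _ w0] conjI allI impI)
    fix w :: real assume w: "0 < w \<and> w < w0"
    show "piece_contribution v n abv s w i a b \<in> {1, -1} \<longleftrightarrow>
        fold_sign v n abv (i + 1) = fold_sign v n abv (i + 2)"
      unfolding contribution[OF conjunct1[OF w] conjunct2[OF w]] by (rule average)
  qed (rule \<open>w0 > 0\<close>)
qed

end
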